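(* Let $\alpha\in(0,1)$ be irrational, and for $n\ge1$ let $p_n/q_n$ be its $n$th convergent. Then $$P_{q_n}(\alpha)=\prod_{r=1}^{q_n}|2\sin\pi r\alpha|=A_nB_nC_n,$$ where $$A_n=|2q_n\sin(\pi\Lambda_n)|,\qquad B_n=\Big|\prod_{t=1}^{q_n-1}\frac{s_{nt}}{2\sin(\pi t/q_n)}\Big|,\qquad C_n=\prod_{t=1}^{q_n-1}\Big(1-\frac{s_{n0}^2}{s_{nt}^2}\Big)^{1/2}.$$ Here, for $t\in\{0,1,\ldots,q_n-1\}$, $$s_{nt}=2\sin\Big(\pi\Big[\frac t{q_n}-|\Lambda_n|\Big(\Big\{\frac{tq_{n-1}}{q_n}\Big\}-\frac12\Big)\Big]\Big).$$
   Context: $\alpha=[0;a_1,a_2,\ldots]$, with convergents given by $q_0=0$, $q_1=1$, $q_{n+1}=a_nq_n+q_{n-1}$ and $p_0=1$, $p_1=0$, $p_{n+1}=a_np_n+p_{n-1}$. $\Lambda_n=q_n\alpha-p_n$. $P_N(\alpha)=\prod_{r=1}^N|2\sin(\pi r\alpha)|$. $\{x\}$ denotes the fractional part of $x$. *)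

theory Defs
  imports Complex_Main
begin

text \<open>Complete quotients of the regular continued fraction of alpha in (0,1):
  x_1 = alpha, x_(k+1) = frac(1/x_k); partial quotients a_k = floor(1/x_k), k >= 1,
  so that alpha = [0; a_1, a_2, ...].\<close>
fun cf_rem :: "real \<Rightarrow> nat \<Rightarrow> real" where
  "cf_rem \<alpha> 0 = \<alpha>"
| "cf_rem \<alpha> (Suc k) = frac (1 / cf_rem \<alpha> k)"

definition cf_a :: "real \<Rightarrow> nat \<Rightarrow> nat" where
  "cf_a \<alpha> k = nat \<lfloor>1 / cf_rem \<alpha> (k - 1)\<rfloor>"

fun cf_q :: "real \<Rightarrow> nat \<Rightarrow> nat" where
  "cf_q \<alpha> 0 = 0"
| "cf_q \<alpha> (Suc 0) = 1"
| "cf_q \<alpha> (Suc (Suc n)) = cf_a \<alpha> (Suc n) * cf_q \<alpha> (Suc n) + cf_q \<alpha> n"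

fun cf_p :: "real \<Rightarrow> nat \<Rightarrow> nat" where
  "cf_p \<alpha> 0 = 1"
| "cf_p \<alpha> (Suc 0) = 0"
| "cf_p \<alpha> (Suc (Suc n)) = cf_a \<alpha> (Suc n) * cf_p \<alpha> (Suc n) + cf_p \<alpha> n"

definition Lambda :: "real \<Rightarrow> nat \<Rightarrow> real" where
  "Lambda \<alpha> n = real (cf_q \<alpha> n) * \<alpha> - real (cf_p \<alpha> n)"

definition sudler :: "nat \<Rightarrow> real \<Rightarrow> real" where
  "sudler N \<alpha> = (\<Prod>r = 1..N. \<bar>2 * sin (pi * real r * \<alpha>)\<bar>)"

definition s_nt :: "real \<Rightarrow> nat \<Rightarrow> nat \<Rightarrow> real" where
  "s_nt \<alpha> n t = 2 * sin (pi * (real t / real (cf_q \<alpha> n)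
      - \<bar>Lambda \<alpha> n\<bar> * (frac (real t * real (cf_q \<alpha> (n - 1)) / real (cf_q \<alpha> n)) - 1/2)))"

end

theory Submission
  imports Defs "HOL-Computational_Algebra.Fundamental_Theorem_Algebra" "HOL-Number_Theory.Cong"
begin

text \<open>Write q = q_n and q\<alpha> = p_n + \<Lambda>. Because p_n q_(n-1) \<equiv> (-1)^n (mod q) and \<Lambda> has the
  sign of (-1)^(n+1), for 0 < r < q the residue t \<equiv> r p_n (mod q) satisfies
  r\<alpha> \<equiv> u_t + \<Lambda>/2 (mod 1), where s_nt = 2 sin(\<pi> u_t). As (q - r)\<alpha> \<equiv> \<Lambda> - r\<alpha> (mod 1), pairing
  r with q - r gives |2 sin(\<pi>r\<alpha>)| |2 sin(\<pi>(q - r)\<alpha>)| = |4 sin(\<pi>(u_t + \<Lambda>/2)) sin(\<pi>(u_t - \<Lambda>/2))|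
  = s_nt^2 - s_n0^2, and r \<mapsto> t permutes {1..q-1}. The factor r = q is |2 sin(\<pi>\<Lambda>)|, and
  \<Prod>_(0<t<q) 2 sin(\<pi>t/q) = q, the value at 1 of (z^q - 1)/(z - 1), turns \<Prod> s_nt into q B_n.\<close>

lemma cf_rem_irrational: "\<alpha> \<notin> \<rat> \<Longrightarrow> cf_rem \<alpha> k \<notin> \<rat>"
  by (induction k) (simp_all add: divide_inverse)

lemma cf_rem_bounds:
  assumes "0 < \<alpha>" "\<alpha> < 1" "\<alpha> \<notin> \<rat>"
  shows "0 < cf_rem \<alpha> k" and "cf_rem \<alpha> k < 1"
proof -
  have "0 < cf_rem \<alpha> k \<and> cf_rem \<alpha> k < 1"
  proof (cases k)
    case (Suc j)
    have "cf_rem \<alpha> k \<noteq> 0"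
      using cf_rem_irrational[OF assms(3), of k] by auto
    moreover have "0 \<le> cf_rem \<alpha> k" "cf_rem \<alpha> k < 1"
      using Suc by (simp_all add: frac_lt_1)
    ultimately show ?thesis
      by simp
  qed (use assms in simp)
  then show "0 < cf_rem \<alpha> k" and "cf_rem \<alpha> k < 1"
    by simp_all
qed

lemma cf_a_Suc:
  assumes "0 < \<alpha>" "\<alpha> < 1" "\<alpha> \<notin> \<rat>"
  shows "1 \<le> cf_a \<alpha> (Suc k)"
    and "real (cf_a \<alpha> (Suc k)) = 1 / cf_rem \<alpha> k - cf_rem \<alpha> (Suc k)"
proof -
  have "1 < 1 / cf_rem \<alpha> k"
    using cf_rem_bounds[OF assms, of k] by simp
  then have floor: "1 \<le> \<lfloor>1 / cf_rem \<alpha> k\<rfloor>"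
    by (simp add: le_floor_iff)
  moreover have a: "cf_a \<alpha> (Suc k) = nat \<lfloor>1 / cf_rem \<alpha> k\<rfloor>"
    by (simp add: cf_a_def)
  ultimately show "1 \<le> cf_a \<alpha> (Suc k)"
    by arith
  have "real (cf_a \<alpha> (Suc k)) = of_int \<lfloor>1 / cf_rem \<alpha> k\<rfloor>"
    unfolding a by (rule of_nat_nat) (use floor in linarith)
  then show "real (cf_a \<alpha> (Suc k)) = 1 / cf_rem \<alpha> k - cf_rem \<alpha> (Suc k)"
    by (simp add: frac_def)
qed

lemma Lambda_Suc:
  assumes "0 < \<alpha>" "\<alpha> < 1" "\<alpha> \<notin> \<rat>"
  shows "Lambda \<alpha> (Suc n) = - cf_rem \<alpha> n * Lambda \<alpha> n"
proof (induction n)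
  case 0
  then show ?case by (simp add: Lambda_def)
next
  case (Suc n)
  have "Lambda \<alpha> (Suc (Suc n)) = real (cf_a \<alpha> (Suc n)) * Lambda \<alpha> (Suc n) + Lambda \<alpha> n"
    by (simp add: Lambda_def algebra_simps)
  also have "Lambda \<alpha> n = - Lambda \<alpha> (Suc n) / cf_rem \<alpha> n"
    using Suc cf_rem_bounds[OF assms, of n] by (simp add: field_simps)
  finally show ?case
    using cf_a_Suc(2)[OF assms, of n] by (simp add: field_simps)
qed

lemma Lambda_sign:
  assumes "0 < \<alpha>" "\<alpha> < 1" "\<alpha> \<notin> \<rat>"
  shows "0 < (-1) ^ Suc n * Lambda \<alpha> n"
proof (induction n)
  case 0
  then show ?case by (simp add: Lambda_def)
next
  case (Suc n)
  then show ?case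
    using Lambda_Suc[OF assms, of n] cf_rem_bounds[OF assms, of n]
    by (simp add: mult.left_commute mult_pos_neg)
qed

lemma cf_det:
  "int (cf_p \<alpha> (Suc n)) * int (cf_q \<alpha> n) - int (cf_p \<alpha> n) * int (cf_q \<alpha> (Suc n)) = (-1) ^ Suc n"
  by (induction n) (simp_all add: algebra_simps)

lemma cf_p_mult_cf_q_cong:
  "[int (cf_p \<alpha> (Suc n)) * int (cf_q \<alpha> n) = (-1) ^ Suc n] (mod int (cf_q \<alpha> (Suc n)))"
  using cf_det[of \<alpha> n] unfolding cong_iff_lin
  by (intro exI[of _ "- int (cf_p \<alpha> n)"]) (simp add: algebra_simps)

lemma cf_q_le_Suc:
  assumes "0 < \<alpha>" "\<alpha> < 1" "\<alpha> \<notin> \<rat>"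
  shows "cf_q \<alpha> n \<le> cf_q \<alpha> (Suc n)"
proof (cases n)
  case (Suc m)
  have "cf_q \<alpha> n \<le> cf_a \<alpha> n * cf_q \<alpha> n"
    using cf_a_Suc(1)[OF assms, of m] Suc by simp
  then show ?thesis
    using Suc by (simp add: trans_le_add1)
qed simp

lemma cf_q_ge_1:
  assumes "0 < \<alpha>" "\<alpha> < 1" "\<alpha> \<notin> \<rat>" "1 \<le> n"
  shows "1 \<le> cf_q \<alpha> n"
  using assms(4)
proof (induction n rule: nat_induct_at_least)
  case (Suc n)
  then show ?case
    using cf_q_le_Suc[OF assms(1-3), of n] by simp
qed simp

lemma cf_q_abs_Lambda_sum:
  assumes "0 < \<alpha>" "\<alpha> < 1" "\<alpha> \<notin> \<rat>"
  shows "real (cf_q \<alpha> (Suc n)) * \<bar>Lambda \<alpha> n\<bar> + real (cf_q \<alpha> n) * \<bar>Lambda \<alpha> (Suc n)\<bar> = 1"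
proof -
  have "real (cf_q \<alpha> (Suc n)) * Lambda \<alpha> n - real (cf_q \<alpha> n) * Lambda \<alpha> (Suc n)
      = of_int (int (cf_p \<alpha> (Suc n)) * int (cf_q \<alpha> n) - int (cf_p \<alpha> n) * int (cf_q \<alpha> (Suc n)))"
    by (simp add: Lambda_def algebra_simps)
  also have "\<dots> = (-1) ^ Suc n"
    by (simp only: cf_det) simp
  finally have det: "real (cf_q \<alpha> (Suc n)) * Lambda \<alpha> n - real (cf_q \<alpha> n) * Lambda \<alpha> (Suc n)
      = (-1) ^ Suc n" .
  have "\<bar>Lambda \<alpha> n\<bar> = (-1) ^ Suc n * Lambda \<alpha> n"
    and "\<bar>Lambda \<alpha> (Suc n)\<bar> = - ((-1) ^ Suc n * Lambda \<alpha> (Suc n))"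
    using Lambda_sign[OF assms, of n] Lambda_sign[OF assms, of "Suc n"] by (cases "even n"; simp)+
  then have "real (cf_q \<alpha> (Suc n)) * \<bar>Lambda \<alpha> n\<bar> + real (cf_q \<alpha> n) * \<bar>Lambda \<alpha> (Suc n)\<bar>
      = (-1) ^ Suc n * (real (cf_q \<alpha> (Suc n)) * Lambda \<alpha> n - real (cf_q \<alpha> n) * Lambda \<alpha> (Suc n))"
    by (simp add: algebra_simps)
  also have "\<dots> = 1"
    unfolding det by (simp flip: power_add)
  finally show ?thesis .
qed

lemma cf_q_mult_abs_Lambda_le:
  assumes "0 < \<alpha>" "\<alpha> < 1" "\<alpha> \<notin> \<rat>"
  shows "real (cf_q \<alpha> n) * \<bar>Lambda \<alpha> n\<bar> \<le> 1"
proof -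
  have "real (cf_q \<alpha> n) * \<bar>Lambda \<alpha> n\<bar> \<le> real (cf_q \<alpha> (Suc n)) * \<bar>Lambda \<alpha> n\<bar>"
    using cf_q_le_Suc[OF assms, of n] by (intro mult_right_mono) simp_all
  also have "\<dots> \<le> 1"
    using cf_q_abs_Lambda_sum[OF assms, of n] mult_nonneg_nonneg[of "real (cf_q \<alpha> n)" "\<bar>Lambda \<alpha> (Suc n)\<bar>"]
    by linarith
  finally show ?thesis .
qed

lemma sin_add_mult_sin_diff: "sin (x + y) * sin (x - y) = (sin x)\<^sup>2 - (sin y)\<^sup>2" for x y :: real
  by (simp add: sin_times_sin cos_double_sin mult_2[symmetric])

lemma abs_sin_pi_eq_if_diff_Ints:
  fixes x y :: real
  assumes "x - y \<in> \<int>"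
  shows "\<bar>sin (pi * x)\<bar> = \<bar>sin (pi * y)\<bar>"
proof -
  obtain k where "x = y + of_int k"
    using assms by (metis Ints_cases add_diff_cancel_left' diff_add_cancel)
  then show ?thesis
    by (simp add: distrib_left sin_add abs_mult)
qed

lemma sin_pi_le_sin_pi:
  fixes u v :: real
  assumes "0 \<le> v" "v \<le> u" "u \<le> 1 - v"
  shows "sin (pi * v) \<le> sin (pi * u)"
proof -
  have "0 \<le> sin (pi * ((u - v) / 2))"
    using assms by (intro sin_ge_zero) (auto simp: mult_left_le)
  moreover have "0 \<le> cos (pi * ((u + v) / 2))"
    using assms by (intro cos_ge_zero) (auto simp: mult_left_le intro: order_trans[of _ 0])
  moreover have "sin (pi * u) - sin (pi * v) = 2 * sin (pi * ((u - v) / 2)) * cos (pi * ((u + v) / 2))"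
    by (simp add: sin_diff_sin algebra_simps add_divide_distrib diff_divide_distrib)
  ultimately show ?thesis
    by (metis diff_ge_0_iff_ge mult_nonneg_nonneg zero_le_numeral)
qed

lemma norm_one_minus_cis: "norm (1 - cis \<theta>) = 2 * \<bar>sin (\<theta> / 2)\<bar>"
proof -
  have "(norm (1 - cis \<theta>))\<^sup>2 = (1 - cos \<theta>)\<^sup>2 + (sin \<theta>)\<^sup>2"
    by (simp add: cmod_def)
  also have "\<dots> = 2 - 2 * cos \<theta>"
    by (simp add: power2_diff)
  also have "\<dots> = (2 * \<bar>sin (\<theta> / 2)\<bar>)\<^sup>2"
    using cos_double_sin[of "\<theta> / 2"] by (simp add: power_mult_distrib)
  finally show ?thesis
    by (rule power2_eq_imp_eq) auto
qed

lemma prod_one_minus_roots_unity: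
  assumes "1 \<le> Q"
  shows "(\<Prod>z\<in>{z::complex. z ^ Q = 1} - {1}. 1 - z) = of_nat Q"
proof -
  define p :: "complex poly" where "p = monom 1 Q - 1"
  define S where "S = {z::complex. z ^ Q = 1}"
  have poly_p: "poly p z = z ^ Q - 1" for z
    by (simp add: p_def poly_monom)
  have pderiv_p: "poly (pderiv p) z = of_nat Q * z ^ (Q - 1)" for z
    by (simp add: p_def pderiv_diff pderiv_monom poly_monom)
  have "lead_coeff p = 1"
    using assms lead_coeff_add_le[of "-1" "monom (1::complex) Q"] by (simp add: p_def degree_monom_eq)
  moreover have "rsquarefree p"
    unfolding rsquarefree_roots using assms by (auto simp: poly_p pderiv_p power_0_left)
  ultimately have "p = (\<Prod>z\<in>S. [:-z, 1:])"
    using complex_poly_decompose_rsquarefree[of p] by (simp add: poly_p S_def)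
  also have "\<dots> = [:-1, 1:] * (\<Prod>z\<in>S - {1}. [:-z, 1:])"
    using assms by (intro prod.remove) (auto simp: S_def finite_roots_unity)
  \<comment> \<open>the derivative of (z - 1) g(z) at 1 is g(1)\<close>
  finally have "poly (pderiv p) 1 = poly (\<Prod>z\<in>S - {1}. [:-z, 1:]) 1"
    by (simp add: pderiv_mult pderiv_pCons del: mult_pCons_left)
  then show ?thesis
    by (simp add: pderiv_p poly_prod S_def)
qed

lemma prod_2_sin_pi_div:
  assumes "1 \<le> Q"
  shows "(\<Prod>k\<in>{1..<Q}. 2 * sin (pi * real k / real Q)) = real Q"
proof -
  define \<zeta> where "\<zeta> k = cis (2 * pi * real k / real Q)" for k
  have "bij_betw \<zeta> {..<Q} {z. z ^ Q = 1}"
    unfolding \<zeta>_def using assms by (intro bij_betw_roots_unity) simp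
  moreover have "bij_betw \<zeta> {0} {1}"
    by (simp add: \<zeta>_def bij_betw_singletonI)
  ultimately have "bij_betw \<zeta> ({..<Q} - {0}) ({z. z ^ Q = 1} - {1})"
    using assms by (intro bij_betw_DiffI) auto
  moreover have "{..<Q} - {0} = {1..<Q}"
    by auto
  ultimately have bij: "bij_betw \<zeta> {1..<Q} ({z. z ^ Q = 1} - {1})"
    by simp
  have "real Q = norm (\<Prod>z\<in>{z::complex. z ^ Q = 1} - {1}. 1 - z)"
    using prod_one_minus_roots_unity[OF assms] by simp
  also have "\<dots> = (\<Prod>z\<in>{z::complex. z ^ Q = 1} - {1}. norm (1 - z))"
    by (rule prod_norm[symmetric])
  also have "\<dots> = (\<Prod>k\<in>{1..<Q}. norm (1 - \<zeta> k))"
    by (rule prod.reindex_bij_betw[OF bij, where g = "\<lambda>z. norm (1 - z)", symmetric])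
  also have "\<dots> = (\<Prod>k\<in>{1..<Q}. 2 * sin (pi * real k / real Q))"
  proof (rule prod.cong[OF refl])
    fix k assume "k \<in> {1..<Q}"
    then have "0 < sin (pi * real k / real Q)"
      by (intro sin_gt_zero) (auto simp: field_simps)
    then show "norm (1 - \<zeta> k) = 2 * sin (pi * real k / real Q)"
      by (simp add: \<zeta>_def norm_one_minus_cis)
  qed
  finally show ?thesis
    by simp
qed

lemma prod_eq_prod_sqrt_reflect:
  fixes f :: "nat \<Rightarrow> real"
  assumes nonneg: "\<And>r. r \<in> {1..<Q} \<Longrightarrow> 0 \<le> f r"
  shows "(\<Prod>r\<in>{1..<Q}. f r) = (\<Prod>r\<in>{1..<Q}. sqrt (f r * f (Q - r)))"
proof -
  have pair_nonneg: "0 \<le> f r * f (Q - r)" if "r \<in> {1..<Q}" for r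
    using that nonneg[of r] nonneg[of "Q - r"] by force
  have "(\<Prod>r\<in>{1..<Q}. f (Q - r)) = (\<Prod>r\<in>{1..<Q}. f r)"
    by (rule prod.reindex_bij_witness[where i="\<lambda>r. Q - r" and j="\<lambda>r. Q - r"]) auto
  then have "(\<Prod>r\<in>{1..<Q}. f r)\<^sup>2 = (\<Prod>r\<in>{1..<Q}. f r * f (Q - r))"
    by (simp add: prod.distrib power2_eq_square)
  also have "\<dots> = (\<Prod>r\<in>{1..<Q}. sqrt (f r * f (Q - r)))\<^sup>2"
    unfolding prod_power_distrib using pair_nonneg by (intro prod.cong) auto
  finally show ?thesis
    by (rule power2_eq_imp_eq) (auto intro!: prod_nonneg nonneg real_sqrt_ge_zero pair_nonneg)
qed

lemma bij_betw_nat_remainders_mult: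
  fixes a n :: nat
  assumes "coprime a n"
  shows "bij_betw (\<lambda>m. m * a mod n) {1..<n} {1..<n}"
proof -
  have "m * a mod n \<in> {1..<n}" if "m \<in> {1..<n}" for m
  proof -
    have "\<not> n dvd m * a"
      using that assms by (auto simp: coprime_commute coprime_dvd_mult_left_iff dest: dvd_imp_le)
    then show ?thesis
      using that by (auto simp: Suc_le_eq dvd_eq_mod_eq_0)
  qed
  moreover have "inj_on (\<lambda>m. m * a mod n) {1..<n}"
  proof (rule inj_onI)
    fix x y assume "x \<in> {1..<n}" "y \<in> {1..<n}" "x * a mod n = y * a mod n"
    then show "x = y"
      using assms by (metis atLeastLessThan_iff cong_def cong_less_imp_eq_nat cong_mult_rcancel_nat
          zero_le)
  qed
  ultimately show ?thesis
    by (simp add: bij_betw_def endo_inj_surj image_subset_iff)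
qed

lemma frac_of_int_div_cong:
  assumes "[a = b] (mod m)"
  shows "frac (of_int a / of_int m :: 'a :: floor_ceiling) = frac (of_int b / of_int m)"
proof -
  obtain k where b: "b = a + m * k"
    using assms by (auto simp: cong_iff_lin)
  show ?thesis
  proof (cases "m = 0")
    case False
    then have "of_int b / of_int m = of_int a / of_int m + (of_int k :: 'a)"
      by (simp add: b field_simps)
    then show ?thesis
      by simp
  qed (simp add: b)
qed

lemma frac_sign_div:
  fixes r Q :: nat and \<epsilon> :: int
  assumes "\<bar>\<epsilon>\<bar> = 1" "0 < r" "r < Q"
  shows "frac (of_int \<epsilon> * real r / real Q) - 1/2 = of_int \<epsilon> * (real r / real Q - 1/2)"
proof -
  have "0 < real r / real Q" "real r / real Q < 1"
    using assms by simp_all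
  then have "frac (real r / real Q) = real r / real Q" and "real r / real Q \<notin> \<int>"
    by (auto simp: frac_eq elim: Ints_cases)
  then show ?thesis
    using assms(1) by (auto simp: abs_if frac_neg split: if_splits)
qed

text \<open>An approximation Q\<alpha> = P + L in which Q' is, up to the sign \<epsilon> = -sgn L, an inverse of P
  modulo Q. The n-th convergent gives P/Q = p_n/q_n, Q' = q_(n-1), \<epsilon> = (-1)^n, and then s t
  is the paper's s_nt.\<close>

locale rational_approximation =
  fixes \<alpha> L :: real and P Q Q' :: nat and \<epsilon> :: int
  assumes Q_ge_1: "1 \<le> Q"
    and approx: "real Q * \<alpha> = real P + L"
    and error_le: "real Q * \<bar>L\<bar> \<le> 1"
    and inverse_cong: "[int P * int Q' = \<epsilon>] (mod int Q)"
    and abs_eps: "\<bar>\<epsilon>\<bar> = 1"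
    and eps_sign: "of_int \<epsilon> * L < 0"
begin

definition u :: "nat \<Rightarrow> real" where
  "u t = real t / real Q - \<bar>L\<bar> * (frac (real t * real Q' / real Q) - 1/2)"

definition s :: "nat \<Rightarrow> real" where
  "s t = 2 * sin (pi * u t)"

lemma eps_cases: "\<epsilon> = 1 \<or> \<epsilon> = -1"
  using abs_eps by (auto simp: abs_if split: if_splits)

lemma abs_mult_eps: "\<bar>L\<bar> * of_int \<epsilon> = - L"
  using eps_cases eps_sign by (auto simp: abs_if)

lemma coprime_P_Q: "coprime P Q"
proof -
  have "[int P * int Q' * \<epsilon> = \<epsilon> * \<epsilon>] (mod int Q)"
    using inverse_cong by (rule cong_mult) simp
  moreover have "\<epsilon> * \<epsilon> = 1"
    using eps_cases by auto
  ultimately have "[int P * (int Q' * \<epsilon>) = 1] (mod int Q)"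
    by (simp add: mult.assoc)
  then have "coprime (int P) (int Q)"
    unfolding coprime_iff_invertible_int by blast
  then show ?thesis
    by simp
qed

lemma residue_shift_Ints:
  assumes r: "r \<in> {1..<Q}"
  shows "real r * \<alpha> - L / 2 - u (r * P mod Q) \<in> \<int>"
proof -
  define t where "t = r * P mod Q"
  have "[int t = int r * int P] (mod int Q)"
    by (simp add: t_def cong_def zmod_int)
  then have "[int t * int Q' = int r * int P * int Q'] (mod int Q)"
    by (rule cong_mult) (rule cong_refl)
  also have "[int r * int P * int Q' = int r * \<epsilon>] (mod int Q)"
    unfolding mult.assoc by (rule cong_mult[OF cong_refl inverse_cong])
  finally have "frac (of_int (int t * int Q') / of_int (int Q) :: real)
      = frac (of_int (int r * \<epsilon>) / of_int (int Q))"
    by (rule frac_of_int_div_cong)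
  then have "frac (real t * real Q' / real Q) = frac (of_int \<epsilon> * real r / real Q)"
    by (simp add: mult.commute)
  then have u_t: "u t = real t / real Q + L * (real r / real Q - 1/2)"
    using frac_sign_div[OF abs_eps, of r Q] r abs_mult_eps
    by (simp add: u_def mult.assoc[symmetric])
  have "real r * real P = real Q * real (r * P div Q) + real t"
    unfolding t_def of_nat_mult[symmetric] of_nat_add[symmetric] by simp
  moreover have "real Q * (real r * \<alpha>) = real r * real P + real r * L"
    by (subst mult.left_commute) (simp add: approx distrib_left)
  ultimately have "real r * \<alpha> = real (r * P div Q) + real t / real Q + real r * L / real Q"
    using Q_ge_1 by (simp add: field_simps)
  then have "real r * \<alpha> - L / 2 - u t = real (r * P div Q)"
    by (simp add: u_t field_simps)
  then show ?thesis
    by (simp add: t_def)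
qed

lemma u_bounds:
  assumes "t \<in> {1..<Q}"
  shows "\<bar>L\<bar> / 2 \<le> u t" and "u t \<le> 1 - \<bar>L\<bar> / 2"
proof -
  define f where "f = frac (real t * real Q' / real Q)"
  have "0 \<le> f" "f < 1"
    by (simp_all add: f_def frac_lt_1)
  then have "\<bar>L\<bar> * \<bar>f - 1/2\<bar> \<le> \<bar>L\<bar> * (1/2)"
    by (intro mult_left_mono) arith+
  then have "\<bar>\<bar>L\<bar> * (f - 1/2)\<bar> \<le> \<bar>L\<bar> / 2"
    by (simp add: abs_mult)
  moreover have "1 / real Q \<le> real t / real Q" "real t / real Q \<le> 1 - 1 / real Q"
    using assms by (simp_all add: divide_right_mono field_simps of_nat_diff)
  moreover have "\<bar>L\<bar> \<le> 1 / real Q"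
    using error_le Q_ge_1 by (simp add: field_simps)
  ultimately show "\<bar>L\<bar> / 2 \<le> u t" and "u t \<le> 1 - \<bar>L\<bar> / 2"
    unfolding u_def f_def[symmetric] abs_le_iff by linarith+
qed

lemma s_0_pos: "0 < s 0"
proof -
  have "L \<noteq> 0"
    using eps_sign by auto
  moreover have "\<bar>L\<bar> \<le> 1"
    using error_le Q_ge_1 by (smt (verit) mult_le_cancel_right1 of_nat_1 of_nat_mono)
  ultimately show ?thesis
    by (auto simp: s_def u_def intro!: sin_gt_zero)
qed

lemma s_0_le: "t \<in> {1..<Q} \<Longrightarrow> s 0 \<le> s t"
  using u_bounds[of t] sin_pi_le_sin_pi[of "\<bar>L\<bar> / 2" "u t"] by (simp add: s_def u_def)

lemma abs_sin_mult_reflect: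
  assumes r: "r \<in> {1..<Q}"
  shows "\<bar>2 * sin (pi * real r * \<alpha>)\<bar> * \<bar>2 * sin (pi * real (Q - r) * \<alpha>)\<bar>
    = (s (r * P mod Q))\<^sup>2 - (s 0)\<^sup>2"
proof -
  define y where "y = real r * \<alpha> - L / 2"
  have "real (Q - r) * \<alpha> - (- (y - L / 2)) = real P"
    using r approx by (simp add: y_def of_nat_diff algebra_simps)
  then have "\<bar>sin (pi * (real (Q - r) * \<alpha>))\<bar> = \<bar>sin (pi * (- (y - L / 2)))\<bar>"
    by (intro abs_sin_pi_eq_if_diff_Ints) simp
  also have "\<bar>sin (pi * (- (y - L / 2)))\<bar> = \<bar>sin (pi * y - pi * (L / 2))\<bar>"
    by (simp only: mult_minus_right sin_minus abs_minus_cancel right_diff_distrib)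
  finally have reflect: "\<bar>sin (pi * real (Q - r) * \<alpha>)\<bar> = \<bar>sin (pi * y - pi * (L / 2))\<bar>"
    by (simp add: mult.assoc)
  define t where "t = r * P mod Q"
  have t: "t \<in> {1..<Q}"
    using bij_betw_nat_remainders_mult[OF coprime_P_Q] r by (auto simp: t_def bij_betw_def)
  have "\<bar>sin (pi * y)\<bar> = \<bar>sin (pi * u t)\<bar>"
    using residue_shift_Ints[OF r] by (intro abs_sin_pi_eq_if_diff_Ints) (simp add: y_def t_def)
  then have sin_y: "(sin (pi * y))\<^sup>2 = (sin (pi * u t))\<^sup>2"
    by (metis power2_abs)
  have sin_L: "(sin (pi * (L / 2)))\<^sup>2 = (sin (pi * u 0))\<^sup>2"
    by (cases "0 \<le> L") (simp_all add: u_def)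
  have "pi * real r * \<alpha> = pi * y + pi * (L / 2)"
    by (simp add: y_def algebra_simps)
  then have "\<bar>2 * sin (pi * real r * \<alpha>)\<bar> * \<bar>2 * sin (pi * real (Q - r) * \<alpha>)\<bar>
      = 4 * \<bar>sin (pi * y + pi * (L / 2)) * sin (pi * y - pi * (L / 2))\<bar>"
    by (simp add: reflect abs_mult)
  also have "\<dots> = \<bar>4 * ((sin (pi * u t))\<^sup>2 - (sin (pi * u 0))\<^sup>2)\<bar>"
    by (simp only: sin_add_mult_sin_diff sin_y sin_L abs_mult abs_numeral)
  also have "4 * ((sin (pi * u t))\<^sup>2 - (sin (pi * u 0))\<^sup>2) = (s t)\<^sup>2 - (s 0)\<^sup>2"
    by (simp add: s_def power_mult_distrib)
  also have "\<bar>(s t)\<^sup>2 - (s 0)\<^sup>2\<bar> = (s t)\<^sup>2 - (s 0)\<^sup>2"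
    using s_0_pos s_0_le[OF t] by (simp add: power_mono)
  finally show ?thesis
    by (simp add: t_def)
qed

lemma prod_abs_sin:
  "(\<Prod>r\<in>{1..<Q}. \<bar>2 * sin (pi * real r * \<alpha>)\<bar>) = (\<Prod>t\<in>{1..<Q}. s t * sqrt (1 - (s 0)\<^sup>2 / (s t)\<^sup>2))"
proof -
  have "(\<Prod>r\<in>{1..<Q}. \<bar>2 * sin (pi * real r * \<alpha>)\<bar>)
      = (\<Prod>r\<in>{1..<Q}. sqrt (\<bar>2 * sin (pi * real r * \<alpha>)\<bar> * \<bar>2 * sin (pi * real (Q - r) * \<alpha>)\<bar>))"
    by (rule prod_eq_prod_sqrt_reflect) simp
  also have "\<dots> = (\<Prod>r\<in>{1..<Q}. sqrt ((s (r * P mod Q))\<^sup>2 - (s 0)\<^sup>2))"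
    by (intro prod.cong refl) (simp only: abs_sin_mult_reflect)
  also have "\<dots> = (\<Prod>t\<in>{1..<Q}. sqrt ((s t)\<^sup>2 - (s 0)\<^sup>2))"
    by (rule prod.reindex_bij_betw[OF bij_betw_nat_remainders_mult[OF coprime_P_Q],
          where g = "\<lambda>t. sqrt ((s t)\<^sup>2 - (s 0)\<^sup>2)"])
  also have "\<dots> = (\<Prod>t\<in>{1..<Q}. s t * sqrt (1 - (s 0)\<^sup>2 / (s t)\<^sup>2))"
  proof (rule prod.cong[OF refl])
    fix t assume "t \<in> {1..<Q}"
    then have "0 < s t"
      using s_0_pos s_0_le[of t] by simp
    then have "(s t)\<^sup>2 - (s 0)\<^sup>2 = (s t)\<^sup>2 * (1 - (s 0)\<^sup>2 / (s t)\<^sup>2)"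
      by (simp add: field_simps)
    then show "sqrt ((s t)\<^sup>2 - (s 0)\<^sup>2) = s t * sqrt (1 - (s 0)\<^sup>2 / (s t)\<^sup>2)"
      using \<open>0 < s t\<close> by (simp add: real_sqrt_mult)
  qed
  finally show ?thesis .
qed

theorem sudler_factorization:
  "sudler Q \<alpha> = \<bar>2 * real Q * sin (pi * L)\<bar>
    * \<bar>\<Prod>t = 1..Q - 1. s t / (2 * sin (pi * real t / real Q))\<bar>
    * (\<Prod>t = 1..Q - 1. sqrt (1 - (s 0)\<^sup>2 / (s t)\<^sup>2))"
proof -
  have interval: "{1..Q - 1} = {1..<Q}"
    using Q_ge_1 by auto
  have "\<bar>sin (pi * (real Q * \<alpha>))\<bar> = \<bar>sin (pi * L)\<bar>"
    by (intro abs_sin_pi_eq_if_diff_Ints) (simp add: approx)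
  then have "sudler Q \<alpha> = \<bar>2 * sin (pi * L)\<bar> * (\<Prod>r\<in>{1..<Q}. \<bar>2 * sin (pi * real r * \<alpha>)\<bar>)"
    using Q_ge_1 by (simp add: sudler_def atLeastLessThanSuc_atLeastAtMost[symmetric]
        prod.atLeastLessThan_Suc mult.assoc abs_mult)
  also have "\<dots> = \<bar>2 * sin (pi * L)\<bar> * (\<Prod>t\<in>{1..<Q}. s t) * (\<Prod>t\<in>{1..<Q}. sqrt (1 - (s 0)\<^sup>2 / (s t)\<^sup>2))"
    unfolding prod_abs_sin prod.distrib by (simp only: mult.assoc)
  also have "(\<Prod>t\<in>{1..<Q}. s t) = real Q * \<bar>\<Prod>t\<in>{1..<Q}. s t / (2 * sin (pi * real t / real Q))\<bar>"
  proof -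
    have "0 < (\<Prod>t\<in>{1..<Q}. s t)"
      using s_0_pos s_0_le by (intro prod_pos) (metis less_le_trans)
    then show ?thesis
      unfolding prod_dividef prod_2_sin_pi_div[OF Q_ge_1] using Q_ge_1 by simp
  qed
  finally show ?thesis
    unfolding interval by (simp add: abs_mult mult_ac)
qed

end

theorem lemma3p1:
  fixes \<alpha> :: real and n :: nat
  assumes "0 < \<alpha>" and "\<alpha> < 1" and "\<alpha> \<notin> \<rat>" and "n \<ge> 1"
  shows "sudler (cf_q \<alpha> n) \<alpha> =
      \<bar>2 * real (cf_q \<alpha> n) * sin (pi * Lambda \<alpha> n)\<bar>
    * \<bar>\<Prod>t = 1..cf_q \<alpha> n - 1. s_nt \<alpha> n t / (2 * sin (pi * real t / real (cf_q \<alpha> n)))\<bar>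
    * (\<Prod>t = 1..cf_q \<alpha> n - 1. sqrt (1 - (s_nt \<alpha> n 0)\<^sup>2 / (s_nt \<alpha> n t)\<^sup>2))"
proof -
  note irrational = assms(1-3)
  obtain m where n: "n = Suc m"
    using assms(4) by (cases n) auto
  interpret rational_approximation \<alpha> "Lambda \<alpha> n" "cf_p \<alpha> n" "cf_q \<alpha> n" "cf_q \<alpha> m" "(-1) ^ n"
  proof
    show "1 \<le> cf_q \<alpha> n"
      using cf_q_ge_1[OF irrational assms(4)] .
    show "real (cf_q \<alpha> n) * \<alpha> = real (cf_p \<alpha> n) + Lambda \<alpha> n"
      by (simp add: Lambda_def)
    show "real (cf_q \<alpha> n) * \<bar>Lambda \<alpha> n\<bar> \<le> 1"
      by (rule cf_q_mult_abs_Lambda_le[OF irrational])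
    show "[int (cf_p \<alpha> n) * int (cf_q \<alpha> m) = (-1) ^ n] (mod int (cf_q \<alpha> n))"
      unfolding n by (rule cf_p_mult_cf_q_cong)
    show "\<bar>(-1) ^ n :: int\<bar> = 1"
      by simp
    show "of_int ((-1) ^ n) * Lambda \<alpha> n < 0"
      using Lambda_sign[OF irrational, of n] by simp
  qed
  have "s_nt \<alpha> n t = s t" for t
    unfolding s_nt_def s_def u_def by (simp add: n)
  then show ?thesis
    using sudler_factorization by simp
qed

end
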